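(* Let $a$ be a (strong) composition with $\ell(a)\le n$. Then $$G^{(\beta)}_a(x_1,\dots,x_n)=\sum_b\beta^{\mathrm{ex}(b)}F_{\mathtt{flat}(b)}(x_1,\dots,x_n),$$ where the sum is over all unsplit glides $b$ of $0^{n-\ell(a)}a$. In particular $G^{(\beta)}_a$ is quasisymmetric.
   Context: A (strong) composition has all entries positive; $\ell(a)$ is its number of entries; $0^m a$ is $a$ with $m$ zeros prepended. Glides: a weak komposition is a weak composition whose positive entries are colored black or red, $\mathrm{ex}(b)$ = number of red entries; for a weak composition or komposition, $\mathtt{flat}$ is the sequence of its nonzero entries (colors forgotten). For a weak composition $a'$ of length $n$ with nonzero entries exactly at positions $n_1<\dots<n_\ell$, a weak komposition $b$ of length $n$ is a glide of $a'$ if there exist $0=i_0<\dots<i_\ell$ with $i_j\le n_j$, $b_k=0$ for $k>i_\ell$, and for each $j$: $b_{i_{j-1}+1}+\dots+b_{i_j}=\mathtt{flat}(a')_j+\#\{\text{red entries among } b_{i_{j-1}+1},\dots,b_{i_j}\}$ and the first nonzero entry among them is black. $\mathcal{G}^{(\beta)}_{a'}(x_1,\dots,x_n)=\sum_b\beta^{\mathrm{ex}(b)}x^b$ over glides $b$ of $a'$. The quasisymmetric glide is $G^{(\beta)}_a(x_1,\dots,x_n)=\mathcal{G}^{(\beta)}_{0^{n-\ell(a)}a}$ if $\ell(a)\le n$ and $0$ otherwise. A glide $b$ of $a'$ is unsplit if $b$ has exactly as many nonzero black entries as $a'$ has nonzero entries, and no zero entry of $b$ lies to the right of a nonzero entry.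 The fundamental quasisymmetric polynomial is $F_\alpha(x_1,\dots,x_n)=\sum x^c$ over weak compositions $c$ of length $n$ with $\mathtt{flat}(c)$ refining $\alpha$ ($c'$ refines $\alpha$ if $\alpha$ is obtained by summing consecutive entries of $c'$). A polynomial is quasisymmetric if the coefficients of $x_{i_1}^{e_1}\cdots x_{i_k}^{e_k}$ and $x_{j_1}^{e_1}\cdots x_{j_k}^{e_k}$ agree for all $i_1<\dots<i_k$, $j_1<\dots<j_k$. *)

theory Defs
  imports Main
begin

text \<open>Weak compositions are lists of naturals (length = number of variables, position k
  (0-indexed) is the exponent of x_(k+1)). Weak kompositions are lists of pairs
  (value, red); the colour of a zero entry is irrelevant and normalised to False (black).\<close>

type_synonym kompo = "(nat \<times> bool) list"

definition flat :: "nat list \<Rightarrow> nat list" where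
  "flat a = filter (\<lambda>x. x \<noteq> 0) a"

definition flatk :: "kompo \<Rightarrow> nat list" where
  "flatk b = filter (\<lambda>x. x \<noteq> 0) (map fst b)"

definition is_red :: "nat \<times> bool \<Rightarrow> bool" where
  "is_red x \<longleftrightarrow> fst x \<noteq> 0 \<and> snd x"

definition is_black_nz :: "nat \<times> bool \<Rightarrow> bool" where
  "is_black_nz x \<longleftrightarrow> fst x \<noteq> 0 \<and> \<not> snd x"

definition ex :: "kompo \<Rightarrow> nat" where
  "ex b = length (filter is_red b)"

definition weak_kompo :: "nat \<Rightarrow> kompo \<Rightarrow> bool" where
  "weak_kompo n b \<longleftrightarrow> length b = n \<and> (\<forall>x\<in>set b. fst x = 0 \<longrightarrow> \<not> snd x)"

text \<open>1-indexed positions of the nonzero entries, increasing.\<close>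
definition nzpos :: "nat list \<Rightarrow> nat list" where
  "nzpos a = filter (\<lambda>k. a ! (k - 1) \<noteq> 0) [1..<length a + 1]"

text \<open>The entries b_(p+1), ..., b_q (1-indexed).\<close>
definition block :: "kompo \<Rightarrow> nat \<Rightarrow> nat \<Rightarrow> kompo" where
  "block b p q = take (q - p) (drop p b)"

definition is_glide :: "nat list \<Rightarrow> kompo \<Rightarrow> bool" where
  "is_glide a' b \<longleftrightarrow>
     (let n = length a'; L = length (flat a'); N = nzpos a' in
      weak_kompo n b \<and>
      (\<exists>i :: nat \<Rightarrow> nat. i 0 = 0 \<and>
         (\<forall>j<L. i j < i (Suc j)) \<and>
         (\<forall>j<L. i (Suc j) \<le> N ! j) \<and>
         (\<forall>k. i L \<le> k \<and> k < n \<longrightarrow> fst (b ! k) = 0) \<and>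
         (\<forall>j<L. let B = block b (i j) (i (Suc j)) in
             sum_list (map fst B) = flat a' ! j + length (filter is_red B) \<and>
             (\<forall>x. find (\<lambda>y. fst y \<noteq> 0) B = Some x \<longrightarrow> \<not> snd x))))"

definition unsplit :: "nat list \<Rightarrow> kompo \<Rightarrow> bool" where
  "unsplit a' b \<longleftrightarrow> length (filter is_black_nz b) = length (flat a') \<and>
     (\<forall>p q. p < q \<and> q < length b \<and> fst (b ! p) \<noteq> 0 \<longrightarrow> fst (b ! q) \<noteq> 0)"

text \<open>Polynomials in x_1..x_n are represented by their coefficient functions on
  exponent vectors (weak compositions of length n).\<close>

definition glide_poly :: "'r::comm_ring_1 \<Rightarrow> nat list \<Rightarrow> nat list \<Rightarrow> 'r" where
  "glide_poly \<beta> a' c = (\<Sum>b\<in>{b. is_glide a' b \<and> map fst b = c}. \<beta> ^ ex b)"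

definition qglide :: "'r::comm_ring_1 \<Rightarrow> nat list \<Rightarrow> nat \<Rightarrow> nat list \<Rightarrow> 'r" where
  "qglide \<beta> a n c =
     (if length a \<le> n then glide_poly \<beta> (replicate (n - length a) 0 @ a) c else 0)"

definition refines :: "nat list \<Rightarrow> nat list \<Rightarrow> bool" where
  "refines c' \<alpha> \<longleftrightarrow> (\<exists>parts. concat parts = c' \<and> map sum_list parts = \<alpha> \<and>
                                (\<forall>p\<in>set parts. p \<noteq> []))"

definition fundF :: "nat list \<Rightarrow> nat \<Rightarrow> nat list \<Rightarrow> 'r::comm_ring_1" where
  "fundF \<alpha> n c = (if length c = n \<and> refines (flat c) \<alpha> then 1 else 0)"

text \<open>Exponent vector of x_(is!0+1)^(es!0) ... (variables 0-indexed).\<close>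
definition mono :: "nat \<Rightarrow> nat list \<Rightarrow> nat list \<Rightarrow> nat list" where
  "mono n is es = map (\<lambda>k. \<Sum>j<length is. if is ! j = k then es ! j else 0) [0..<n]"

definition quasisym :: "nat \<Rightarrow> (nat list \<Rightarrow> 'r) \<Rightarrow> bool" where
  "quasisym n P \<longleftrightarrow> (\<forall>is js es. length is = length es \<and> length js = length es \<and>
      sorted_wrt (<) is \<and> sorted_wrt (<) js \<and> (\<forall>i\<in>set is. i < n) \<and> (\<forall>j\<in>set js. j < n)
      \<longrightarrow> P (mono n is es) = P (mono n js es))"

end

theory Submission
  imports Defs
begin

text \<open>For the padded composition \<open>0^m a\<close> all zeros come first, so the positional constraints of a
  glide are automatic: a weak komposition is a glide exactly when its nonzero entries split into
  consecutive groups, one per part \<open>a_j\<close>, each starting with a black entry and of weight \<open>a_j\<close>,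
  where a red entry weighs one less than its value. Absorbing every black entry of a group into its
  predecessor leaves a single black entry per group, i.e. the nonzero part of an unsplit glide \<open>u\<close>,
  and the values before merging refine those after. Conversely, \<open>u\<close> together with a refinement of
  \<open>flat u\<close> by \<open>flat c\<close> recovers the glide: each entry is cut into its pieces and only the first
  piece keeps the colour. This bijection preserves the red entries, so the coefficient of \<open>x^c\<close>
  counts the unsplit glides \<open>u\<close> for which \<open>flat c\<close> refines \<open>flat u\<close>, which is the
  fundamental expansion. Quasisymmetry follows since \<open>F_\<alpha>(c)\<close> only depends on \<open>flat c\<close>.\<close>

lemma filter_take_eq_take_filter:
  "filter P (take k xs) = take (length (filter P (take k xs))) (filter P xs)"
proof -
  have "filter P xs = filter P (take k xs) @ filter P (drop k xs)"
    by (metis append_take_drop_id filter_append)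
  then show ?thesis by (metis append_eq_conv_conj)
qed

lemma exists_take_length_filter:
  "t \<le> length (filter P xs) \<Longrightarrow> \<exists>k\<le>length xs. length (filter P (take k xs)) = t"
proof (induction xs arbitrary: t)
  case (Cons x xs)
  show ?case
  proof (cases t)
    case (Suc t')
    define s where "s = (if P x then t' else t)"
    have "s \<le> length (filter P xs)" using Cons.prems Suc by (auto simp: s_def)
    then obtain k where "k \<le> length xs" "length (filter P (take k xs)) = s" using Cons.IH by blast
    then show ?thesis using Suc by (intro exI[of _ "Suc k"]) (auto simp: s_def)
  qed (auto intro: exI[of _ 0])
qed simp

lemma exists_take_filter_eq_take:
  "t \<le> length (filter P xs) \<Longrightarrow> \<exists>k\<le>length xs. filter P (take k xs) = take t (filter P xs)"
  using exists_take_length_filter filter_take_eq_take_filter by metis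

lemma length_filter_take_mono:
  "k \<le> k' \<Longrightarrow> length (filter P (take k xs)) \<le> length (filter P (take k' xs))"
  by (metis filter_append le_add_diff_inverse length_append le_add1 take_add)

lemma concat_blocks:
  "i 0 = 0 \<Longrightarrow> \<forall>j<k. i j \<le> i (Suc j) \<Longrightarrow>
   concat (map (\<lambda>j. block b (i j) (i (Suc j))) [0..<k]) = take (i k) b"
proof (induction k)
  case (Suc k)
  then have "take (i (Suc k)) b = take (i k) b @ block b (i k) (i (Suc k))"
    unfolding block_def by (metis le_add_diff_inverse less_Suc_eq take_add)
  with Suc show ?case by simp
qed simp

lemma length_le_length_concat: "\<forall>g\<in>set gs. g \<noteq> [] \<Longrightarrow> length gs \<le> length (concat gs)"
proof (induction gs)
  case (Cons g gs)
  then show ?case by (cases g) auto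
qed simp

lemma append_eq_append_sum_list_eq:
  fixes xs ys :: "nat list"
  assumes eq: "xs @ X = ys @ Y" and sum: "sum_list xs = sum_list ys" and pos: "\<forall>x\<in>set (xs @ X). 0 < x"
  shows "xs = ys"
proof -
  obtain us where us: "xs = ys @ us \<and> us @ X = Y \<or> xs @ us = ys \<and> X = us @ Y"
    using eq unfolding append_eq_append_conv2 by blast
  then have "sum_list us = 0" and "\<forall>x\<in>set us. 0 < x" using sum pos by auto
  then have "us = []" by (cases us) auto
  then show ?thesis using us by auto
qed

lemma find_eq_filter: "find P xs = (case filter P xs of [] \<Rightarrow> None | x # _ \<Rightarrow> Some x)"
  by (induction xs) auto

lemma refines_Nil: "refines [] []"
  unfolding refines_def by (intro exI[of _ "[]"]) simp

lemma refines_Cons: "refines xs ys \<Longrightarrow> refines (x # xs) (x # ys)"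
proof -
  assume "refines xs ys"
  then obtain ps where "concat ps = xs" "map sum_list ps = ys" "\<forall>p\<in>set ps. p \<noteq> []"
    unfolding refines_def by blast
  then show ?thesis unfolding refines_def by (intro exI[of _ "[x] # ps"]) auto
qed

lemma refines_Cons_add: "refines ((x + y) # xs) ys \<Longrightarrow> refines (x # y # xs) ys"
proof -
  assume "refines ((x + y) # xs) ys"
  then obtain ps where ps: "concat ps = (x + y) # xs" "map sum_list ps = ys" "\<forall>p\<in>set ps. p \<noteq> []"
    unfolding refines_def by blast
  obtain p ps' where ps': "ps = p # ps'" using ps(1) by (cases ps) auto
  then obtain q where q: "p = (x + y) # q" "q @ concat ps' = xs" using ps by (cases p) auto
  have "concat ((x # y # q) # ps') = x # y # xs" using q by simp
  moreover have "map sum_list ((x # y # q) # ps') = ys" using ps(2) ps' q(1) by (simp add: add.assoc)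
  moreover have "\<forall>p\<in>set ((x # y # q) # ps'). p \<noteq> []" using ps(3) ps' by simp
  ultimately show ?thesis unfolding refines_def by blast
qed

lemma refines_append: "refines xs ys \<Longrightarrow> refines xs' ys' \<Longrightarrow> refines (xs @ xs') (ys @ ys')"
proof -
  assume "refines xs ys" "refines xs' ys'"
  then obtain ps ps' where "concat ps = xs" "map sum_list ps = ys" "\<forall>p\<in>set ps. p \<noteq> []"
    "concat ps' = xs'" "map sum_list ps' = ys'" "\<forall>p\<in>set ps'. p \<noteq> []"
    unfolding refines_def by blast
  then show ?thesis unfolding refines_def by (intro exI[of _ "ps @ ps'"]) auto
qed

definition nonzeros :: "kompo \<Rightarrow> kompo" where
  "nonzeros b = filter (\<lambda>x. fst x \<noteq> 0) b"

definition weight :: "nat \<times> bool \<Rightarrow> nat" where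
  "weight x = fst x - (if snd x then 1 else 0)"

text \<open>A block of a glide with its zeros removed: the block condition says that its weight is
  the corresponding part of the composition.\<close>
definition glide_group :: "nat \<Rightarrow> kompo \<Rightarrow> bool" where
  "glide_group k g \<longleftrightarrow>
     g \<noteq> [] \<and> \<not> snd (hd g) \<and> (\<forall>x\<in>set g. 0 < fst x) \<and> sum_list (map weight g) = k"

definition grouped :: "nat list \<Rightarrow> kompo \<Rightarrow> bool" where
  "grouped a s \<longleftrightarrow> (\<exists>gs. concat gs = s \<and> list_all2 glide_group a gs)"

lemma sum_list_weight:
  "\<forall>x\<in>set s. 0 < fst x \<Longrightarrow> sum_list (map weight s) + length (filter snd s) = sum_list (map fst s)"
  by (induction s) (auto simp: weight_def)

lemma nonzeros_append [simp]: "nonzeros (xs @ ys) = nonzeros xs @ nonzeros ys"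
  by (simp add: nonzeros_def)

lemma nonzeros_take_drop: "nonzeros b = nonzeros (take k b) @ nonzeros (drop k b)"
  by (metis append_take_drop_id nonzeros_append)

lemma nonzeros_drop_eq_Nil_iff:
  "nonzeros (drop k b) = [] \<longleftrightarrow> (\<forall>q. k \<le> q \<and> q < length b \<longrightarrow> fst (b ! q) = 0)"
  unfolding nonzeros_def filter_empty_conv all_set_conv_all_nth
  by (auto dest: le_Suc_ex)

lemma ex_eq_length_filter_nonzeros: "ex b = length (filter snd (nonzeros b))"
  unfolding ex_def nonzeros_def filter_filter by (metis (no_types, lifting) filter_cong is_red_def)

lemma length_filter_is_black_nz: "length (filter is_black_nz b) = length (filter (\<lambda>x. \<not> snd x) (nonzeros b))"
  unfolding nonzeros_def filter_filter by (metis (no_types, lifting) filter_cong is_black_nz_def)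

lemma flat_map_fst: "flat (map fst b) = map fst (nonzeros b)"
  by (simp add: flat_def nonzeros_def filter_map o_def)

lemma flatk_eq_map_fst_nonzeros: "flatk b = map fst (nonzeros b)"
  by (simp add: flatk_def nonzeros_def filter_map o_def)

lemma glide_group_nonzeros_iff:
  assumes "0 < k"
  shows "glide_group k (nonzeros B) \<longleftrightarrow>
    sum_list (map fst B) = k + length (filter is_red B) \<and>
    (\<forall>x. find (\<lambda>y. fst y \<noteq> 0) B = Some x \<longrightarrow> \<not> snd x)"
proof -
  have red: "filter is_red B = filter snd (nonzeros B)"
    unfolding nonzeros_def is_red_def by (simp add: filter_filter conj_commute)
  have sum: "sum_list (map fst B) = sum_list (map fst (nonzeros B))"
    unfolding nonzeros_def by (rule sum_list_map_filter[symmetric]) auto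
  have pos: "\<forall>x\<in>set (nonzeros B). 0 < fst x" by (auto simp: nonzeros_def)
  have find: "find (\<lambda>y. fst y \<noteq> 0) B = (case nonzeros B of [] \<Rightarrow> None | x # _ \<Rightarrow> Some x)"
    unfolding find_eq_filter nonzeros_def ..
  show ?thesis
    using sum_list_weight[OF pos] pos assms unfolding glide_group_def red sum find
    by (auto split: list.splits)
qed

lemma flat_replicate_zero: "\<forall>x\<in>set a. 0 < x \<Longrightarrow> flat (replicate m 0 @ a) = a"
  unfolding flat_def by (induction m) (auto intro: filter_True)

lemma nzpos_replicate_zero:
  assumes "\<forall>x\<in>set a. 0 < x"
  shows "nzpos (replicate m 0 @ a) = [Suc m..<Suc m + length a]"
proof -
  let ?P = "\<lambda>k. (replicate m 0 @ a) ! (k - 1) \<noteq> 0"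
  have "[1..<Suc m + length a] = [1..<Suc m] @ [Suc m..<Suc m + length a]"
    by (rule upt_add_eq_append) simp
  moreover have "filter ?P [1..<Suc m] = []"
    by (auto simp: filter_empty_conv nth_append)
  moreover have "filter ?P [Suc m..<Suc m + length a] = [Suc m..<Suc m + length a]"
    using assms by (force intro!: filter_True simp: nth_append)
  ultimately show ?thesis unfolding nzpos_def by simp
qed

lemma is_glide_padded_iff:
  assumes "\<forall>x\<in>set a. 0 < x"
  shows "is_glide (replicate m 0 @ a) b \<longleftrightarrow> weak_kompo (m + length a) b \<and>
    (\<exists>i. i 0 = 0 \<and>
      (\<forall>j<length a. i j < i (Suc j) \<and> i (Suc j) \<le> Suc (m + j) \<and>
          glide_group (a ! j) (nonzeros (block b (i j) (i (Suc j))))) \<and>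
      (\<forall>k. i (length a) \<le> k \<and> k < m + length a \<longrightarrow> fst (b ! k) = 0))"
proof -
  have nth: "nzpos (replicate m 0 @ a) ! j = Suc (m + j)" if "j < length a" for j
    using that by (simp add: nzpos_replicate_zero[OF assms] del: upt_Suc)
  have grp: "glide_group (a ! j) (nonzeros B) \<longleftrightarrow>
    sum_list (map fst B) = a ! j + length (filter is_red B) \<and>
    (\<forall>x. find (\<lambda>y. fst y \<noteq> 0) B = Some x \<longrightarrow> \<not> snd x)" if "j < length a" for j B
    using assms that by (intro glide_group_nonzeros_iff) simp
  have "(i 0 = 0 \<and> (\<forall>j<length a. i j < i (Suc j)) \<and>
          (\<forall>j<length a. i (Suc j) \<le> nzpos (replicate m 0 @ a) ! j) \<and>
          (\<forall>k. i (length a) \<le> k \<and> k < m + length a \<longrightarrow> fst (b ! k) = 0) \<and>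
          (\<forall>j<length a. sum_list (map fst (block b (i j) (i (Suc j)))) =
              a ! j + length (filter is_red (block b (i j) (i (Suc j)))) \<and>
              (\<forall>x. find (\<lambda>y. fst y \<noteq> 0) (block b (i j) (i (Suc j))) = Some x \<longrightarrow> \<not> snd x))) \<longleftrightarrow>
      (i 0 = 0 \<and>
       (\<forall>j<length a. i j < i (Suc j) \<and> i (Suc j) \<le> Suc (m + j) \<and>
          glide_group (a ! j) (nonzeros (block b (i j) (i (Suc j))))) \<and>
       (\<forall>k. i (length a) \<le> k \<and> k < m + length a \<longrightarrow> fst (b ! k) = 0))"
    for i using nth grp by (auto simp: imp_conjR all_conj_distrib)
  then show ?thesis
    unfolding is_glide_def Let_def flat_replicate_zero[OF assms] length_append length_replicate
    by (simp only:)
qed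

lemma grouped_nonzeros_if_cuts:
  assumes "i 0 = 0"
    and "\<forall>j<length a. i j < i (Suc j) \<and> glide_group (a ! j) (nonzeros (block b (i j) (i (Suc j))))"
    and "\<forall>k. i (length a) \<le> k \<and> k < length b \<longrightarrow> fst (b ! k) = 0"
  shows "grouped a (nonzeros b)"
proof -
  let ?gs = "map (\<lambda>j. nonzeros (block b (i j) (i (Suc j)))) [0..<length a]"
  have "concat ?gs = nonzeros (concat (map (\<lambda>j. block b (i j) (i (Suc j))) [0..<length a]))"
    by (simp add: nonzeros_def filter_concat o_def)
  also have "\<dots> = nonzeros (take (i (length a)) b)"
    using concat_blocks[of i "length a" b] assms(1,2) by (simp add: less_imp_le)
  finally have take: "concat ?gs = nonzeros (take (i (length a)) b)" .
  have "nonzeros (drop (i (length a)) b) = []"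
    using assms(3) nonzeros_drop_eq_Nil_iff by blast
  then have "concat ?gs = nonzeros b"
    using take nonzeros_take_drop[of b "i (length a)"] by simp
  moreover have "list_all2 glide_group a ?gs"
    using assms(2) by (simp add: list_all2_conv_all_nth)
  ultimately show ?thesis unfolding grouped_def by blast
qed

lemma cuts_if_concat_eq_nonzeros:
  assumes gs: "concat gs = nonzeros b" and ne: "\<forall>g\<in>set gs. g \<noteq> []"
  obtains i where "i 0 = 0"
    and "\<forall>j<length gs. i j < i (Suc j) \<and> i (Suc j) + (length gs - Suc j) \<le> length b \<and>
           nonzeros (block b (i j) (i (Suc j))) = gs ! j"
    and "\<forall>k. i (length gs) \<le> k \<and> k < length b \<longrightarrow> fst (b ! k) = 0"
proof -
  \<comment> \<open>Cut after the shortest prefix containing the first \<open>j\<close> groups; the bound holds because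
    each later group still needs nonzero entries of its own.\<close>
  define i where "i j = (LEAST k. nonzeros (take k b) = concat (take j gs))" for j
  have split: "nonzeros b = concat (take j gs) @ concat (drop j gs)" for j
    unfolding gs[symmetric] by (metis append_take_drop_id concat_append)
  have i: "nonzeros (take (i j) b) = concat (take j gs) \<and> i j \<le> length b" for j
  proof -
    have "length (concat (take j gs)) \<le> length (nonzeros b)" using split[of j] by simp
    then obtain k where "k \<le> length b" "nonzeros (take k b) = concat (take j gs)"
      using exists_take_filter_eq_take[of _ "\<lambda>x. fst x \<noteq> 0" b] split[of j]
      unfolding nonzeros_def by (metis append_eq_conv_conj)
    then show ?thesis
      unfolding i_def by (metis (mono_tags, lifting) LeastI Least_le order_trans)
  qed
  have i_drop: "nonzeros (drop (i j) b) = concat (drop j gs)" for j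
    using nonzeros_take_drop[of b "i j"] split[of j] i[of j] by simp
  have "i 0 = 0" unfolding i_def by (rule Least_eq_0) (simp add: nonzeros_def)
  moreover have "i j < i (Suc j) \<and> i (Suc j) + (length gs - Suc j) \<le> length b \<and>
      nonzeros (block b (i j) (i (Suc j))) = gs ! j" if j: "j < length gs" for j
  proof (intro conjI)
    have take_Suc: "concat (take (Suc j) gs) = concat (take j gs) @ gs ! j"
      using j by (simp add: take_Suc_conv_app_nth)
    show less: "i j < i (Suc j)"
    proof (rule ccontr)
      assume "\<not> i j < i (Suc j)"
      then have "length (nonzeros (take (i (Suc j)) b)) \<le> length (nonzeros (take (i j) b))"
        unfolding nonzeros_def by (simp add: length_filter_take_mono)
      then show False using i[of j] i[of "Suc j"] take_Suc ne j by (simp add: nth_mem)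
    qed
    have "length gs - Suc j \<le> length (concat (drop (Suc j) gs))"
      using length_le_length_concat[of "drop (Suc j) gs"] ne by (simp add: in_set_dropD)
    also have "\<dots> \<le> length b - i (Suc j)"
      using i_drop[of "Suc j"] unfolding nonzeros_def by (metis length_drop length_filter_le)
    finally show "i (Suc j) + (length gs - Suc j) \<le> length b" using i[of "Suc j"] by (simp add: le_diff_conv2 add.commute)
    have "take (i (Suc j)) b = take (i j) b @ block b (i j) (i (Suc j))"
      unfolding block_def using less by (metis le_add_diff_inverse less_imp_le take_add)
    then show "nonzeros (block b (i j) (i (Suc j))) = gs ! j"
      using i[of j] i[of "Suc j"] take_Suc by simp
  qed
  moreover have "\<forall>k. i (length gs) \<le> k \<and> k < length b \<longrightarrow> fst (b ! k) = 0"
    using i_drop[of "length gs"] nonzeros_drop_eq_Nil_iff by simp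
  ultimately show thesis using that by blast
qed

lemma is_glide_padded_iff_grouped:
  assumes pos: "\<forall>x\<in>set a. 0 < x"
  shows "is_glide (replicate m 0 @ a) b \<longleftrightarrow> weak_kompo (m + length a) b \<and> grouped a (nonzeros b)"
proof
  assume "is_glide (replicate m 0 @ a) b"
  then show "weak_kompo (m + length a) b \<and> grouped a (nonzeros b)"
    unfolding is_glide_padded_iff[OF pos]
    using grouped_nonzeros_if_cuts[of _ a b] by (auto simp: weak_kompo_def)
next
  assume b: "weak_kompo (m + length a) b \<and> grouped a (nonzeros b)"
  then obtain gs where gs: "concat gs = nonzeros b" "list_all2 glide_group a gs"
    unfolding grouped_def by blast
  have len: "length gs = length a" "length b = m + length a"
    using gs(2) b by (auto simp: list_all2_lengthD weak_kompo_def)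
  have "\<forall>g\<in>set gs. g \<noteq> []"
    using gs(2) by (auto simp: list_all2_conv_all_nth in_set_conv_nth glide_group_def)
  then obtain i where "i 0 = 0"
    and "\<forall>j<length gs. i j < i (Suc j) \<and> i (Suc j) + (length gs - Suc j) \<le> length b \<and>
           nonzeros (block b (i j) (i (Suc j))) = gs ! j"
    and "\<forall>k. i (length gs) \<le> k \<and> k < length b \<longrightarrow> fst (b ! k) = 0"
    using cuts_if_concat_eq_nonzeros[OF gs(1)] by blast
  then show "is_glide (replicate m 0 @ a) b"
    unfolding is_glide_padded_iff[OF pos] using b gs(2) len
    by (intro conjI exI[of _ i]) (auto simp: list_all2_conv_all_nth)
qed

fun merge :: "kompo \<Rightarrow> kompo" where
  "merge (x # y # ys) = (if snd y then x # merge (y # ys) else merge ((fst x + fst y, snd x) # ys))"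
| "merge ys = ys"

definition unsplit_group :: "nat \<Rightarrow> kompo \<Rightarrow> bool" where
  "unsplit_group k h \<longleftrightarrow> glide_group k h \<and> (\<forall>x\<in>set (tl h). snd x)"

lemma hd_merge:
  "xs \<noteq> [] \<Longrightarrow>
   merge xs \<noteq> [] \<and> snd (hd (merge xs)) = snd (hd xs) \<and> fst (hd xs) \<le> fst (hd (merge xs))"
  by (induction xs rule: merge.induct) fastforce+

lemma tl_merge_red: "\<forall>x\<in>set (tl (merge xs)). snd x"
proof (induction xs rule: merge.induct)
  case (1 x y ys)
  show ?case
  proof (cases "snd y")
    case True
    then have "snd (hd (merge (y # ys)))" using hd_merge[of "y # ys"] by simp
    then show ?thesis using True "1.IH"(1) by (cases "merge (y # ys)") auto
  qed (use "1.IH"(2) in simp)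
qed simp_all

lemma merge_pos: "\<forall>x\<in>set xs. 0 < fst x \<Longrightarrow> \<forall>x\<in>set (merge xs). 0 < fst x"
  by (induction xs rule: merge.induct) auto

lemma sum_list_weight_merge:
  "\<forall>x\<in>set xs. 0 < fst x \<Longrightarrow> sum_list (map weight (merge xs)) = sum_list (map weight xs)"
  by (induction xs rule: merge.induct) (auto simp: weight_def)

lemma length_filter_snd_merge: "length (filter snd (merge xs)) = length (filter snd xs)"
  by (induction xs rule: merge.induct) auto

lemma sum_list_fst_merge: "sum_list (map fst (merge xs)) = sum_list (map fst xs)"
  by (induction xs rule: merge.induct) (auto simp: add.assoc)

lemma length_merge_le: "length (merge xs) \<le> length xs"
  by (induction xs rule: merge.induct) (auto simp: le_SucI)

lemma refines_merge: "refines (map fst xs) (map fst (merge xs))"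
  by (induction xs rule: merge.induct) (auto intro: refines_Cons refines_Cons_add refines_Nil)

lemma merge_inj:
  "merge xs = merge ys \<Longrightarrow> map fst xs = map fst ys \<Longrightarrow> \<forall>x\<in>set xs. 0 < fst x \<Longrightarrow> xs = ys"
proof (induction xs arbitrary: ys rule: merge.induct)
  case (1 x y zs)
  from "1.prems"(2) obtain x' y' zs' where ys: "ys = x' # y' # zs'" "fst x' = fst x" "fst y' = fst y"
    "map fst zs' = map fst zs" by (auto simp: Cons_eq_map_conv)
  have "fst (hd (merge ((fst x + fst y, snd x) # zs))) > fst x'"
    and "fst (hd (merge ((fst x' + fst y', snd x') # zs'))) > fst x"
    using hd_merge[of "(fst x + fst y, snd x) # zs"] hd_merge[of "(fst x' + fst y', snd x') # zs'"]
      "1.prems"(3) ys(2,3) by auto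
  have snd_y: "snd y' = snd y"
  proof (rule ccontr)
    assume "snd y' \<noteq> snd y"
    then have "x # merge (y # zs) = merge ((fst x' + fst y', snd x') # zs') \<or>
        merge ((fst x + fst y, snd x) # zs) = x' # merge (y' # zs')"
      using "1.prems"(1) ys(1) by (cases "snd y") auto
    then have "x = hd (merge ((fst x' + fst y', snd x') # zs')) \<or>
        x' = hd (merge ((fst x + fst y, snd x) # zs))"
      by (metis list.sel(1))
    then show False using \<open>fst x' < _\<close> \<open>fst x < _\<close> ys(2) by auto
  qed
  show ?case
  proof (cases "snd y")
    case True
    then have x: "x = x'" and tl: "merge (y # zs) = merge (y' # zs')"
      using "1.prems"(1) ys(1) snd_y by auto
    have "y # zs = y' # zs'"
      by (rule "1.IH"(1)[OF True tl]) (use "1.prems"(3) ys(3,4) in auto)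
    then show ?thesis using x ys(1) by simp
  next
    case False
    then have tl: "merge ((fst x + fst y, snd x) # zs) = merge ((fst x' + fst y', snd x') # zs')"
      using "1.prems"(1) ys(1) snd_y by simp
    have "(fst x + fst y, snd x) # zs = (fst x' + fst y', snd x') # zs'"
      by (rule "1.IH"(2)[OF False tl]) (use "1.prems"(3) ys(2-4) in auto)
    then show ?thesis using False ys snd_y by (simp add: prod_eq_iff)
  qed
next
  case ("2_1" ys)
  then show ?case by simp
next
  case ("2_2" v ys)
  from "2_2.prems"(2) obtain w where "ys = [w]" by (auto simp: Cons_eq_map_conv)
  then show ?case using "2_2" by simp
qed

lemma unsplit_group_merge: "glide_group k g \<Longrightarrow> unsplit_group k (merge g)"
  using hd_merge[of g] tl_merge_red[of g] merge_pos[of g] sum_list_weight_merge[of g]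
  unfolding unsplit_group_def glide_group_def by auto

lemma unsplit_groups_merge: "list_all2 glide_group a gs \<Longrightarrow> list_all2 unsplit_group a (map merge gs)"
  by (simp add: list_all2_conv_all_nth unsplit_group_merge)

lemma glide_groups_if_unsplit_groups: "list_all2 unsplit_group a hs \<Longrightarrow> list_all2 glide_group a hs"
  by (erule list_all2_mono) (simp add: unsplit_group_def)

definition blacks :: "nat list \<Rightarrow> kompo" where
  "blacks q = map (\<lambda>v. (v, False)) q"

definition split_entries :: "kompo \<Rightarrow> nat list list \<Rightarrow> kompo" where
  "split_entries t ps = concat (map2 (\<lambda>x p. (hd p, snd x) # blacks (tl p)) t ps)"

lemma split_entries_Nil [simp]: "split_entries [] ps = []"
  by (simp add: split_entries_def)

lemma split_entries_Cons [simp]: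
  "split_entries (x # t) (p # ps) = (hd p, snd x) # blacks (tl p) @ split_entries t ps"
  by (simp add: split_entries_def)

lemma split_entries_append:
  "split_entries (t @ t') ps = split_entries t (take (length t) ps) @ split_entries t' (drop (length t) ps)"
  by (simp add: split_entries_def zip_append1)

lemma map_fst_split_entries:
  "length ps = length t \<Longrightarrow> \<forall>p\<in>set ps. p \<noteq> [] \<Longrightarrow> map fst (split_entries t ps) = concat ps"
proof (induction t arbitrary: ps)
  case (Cons x t)
  then obtain p ps' where "ps = p # ps'" by (cases ps) auto
  with Cons show ?case by (cases p) (auto simp: blacks_def o_def)
qed simp

lemma sum_list_weight_split_entries:
  assumes "map sum_list ps = map fst t" and "\<forall>p\<in>set ps. p \<noteq> [] \<and> (\<forall>v\<in>set p. 0 < v)"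
  shows "sum_list (map weight (split_entries t ps)) = sum_list (map weight t)"
  using assms
proof (induction t arbitrary: ps)
  case (Cons x t)
  then obtain v q ps' where ps: "ps = (v # q) # ps'" "0 < v" "v + sum_list q = fst x"
    by (auto simp: Cons_eq_map_conv neq_Nil_conv)
  have "sum_list (map weight (blacks q)) = sum_list q"
    by (induction q) (auto simp: blacks_def weight_def)
  moreover have "weight (v, snd x) + sum_list q = weight x"
    using ps by (auto simp: weight_def)
  ultimately show ?case using Cons ps by simp
qed simp

lemma merge_blacks: "merge ((v, c) # blacks q @ R) = merge ((v + sum_list q, c) # R)"
  by (induction q arbitrary: v) (simp_all add: blacks_def add.assoc)

lemma merge_split_entries_red:
  assumes "\<forall>r\<in>set rs. snd r" "map sum_list ps = map fst rs" "\<forall>p\<in>set ps. p \<noteq> []"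
  shows "merge (x # split_entries rs ps) = x # rs"
  using assms
proof (induction rs arbitrary: x ps)
  case (Cons r rs)
  then obtain p ps' where ps: "ps = p # ps'" "p \<noteq> []" "r = (sum_list p, True)"
    by (auto simp: Cons_eq_map_conv prod_eq_iff)
  have "merge ((hd p, True) # blacks (tl p) @ split_entries rs ps') = merge (r # split_entries rs ps')"
    using ps by (simp add: merge_blacks sum_list.Cons[symmetric] del: sum_list.Cons)
  then show ?case using Cons ps by simp
qed simp

lemma split_unsplit_group:
  assumes h: "unsplit_group k h" and ps: "map sum_list ps = map fst h"
    and pos: "\<forall>p\<in>set ps. p \<noteq> [] \<and> (\<forall>v\<in>set p. 0 < v)"
  shows "glide_group k (split_entries h ps) \<and> merge (split_entries h ps) = h"
proof -
  obtain x rs where h_eq: "h = x # rs" "\<not> snd x" "\<forall>r\<in>set rs. snd r"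
    using h unfolding unsplit_group_def glide_group_def by (cases h) auto
  obtain p ps' where ps_eq: "ps = p # ps'" "p \<noteq> []" "x = (sum_list p, False)"
    using ps pos h_eq by (cases ps) (auto simp: prod_eq_iff)
  have "merge (split_entries h ps) = merge (x # split_entries rs ps')"
    using h_eq ps_eq by (simp add: merge_blacks sum_list.Cons[symmetric] del: sum_list.Cons)
  also have "\<dots> = h"
    using merge_split_entries_red[of rs ps' x] h_eq ps ps_eq pos by simp
  finally have "merge (split_entries h ps) = h" .
  moreover have "\<forall>y\<in>set (split_entries h ps). 0 < fst y"
    using map_fst_split_entries[of ps h] ps pos
    by (metis (no_types, lifting) imageI length_map list.set_map set_concat UN_iff)
  ultimately show ?thesis
    using h sum_list_weight_split_entries[OF ps pos] h_eq ps_eq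
    unfolding unsplit_group_def glide_group_def by simp
qed

lemma grouped_split_entries:
  "list_all2 unsplit_group a hs \<Longrightarrow> map sum_list ps = map fst (concat hs) \<Longrightarrow>
   \<forall>p\<in>set ps. p \<noteq> [] \<and> (\<forall>v\<in>set p. 0 < v) \<Longrightarrow>
   \<exists>gs. split_entries (concat hs) ps = concat gs \<and> list_all2 glide_group a gs \<and> map merge gs = hs"
proof (induction hs arbitrary: a ps)
  case Nil
  from Nil.prems(1) have "a = []" by simp
  then show ?case by (intro exI[of _ "[]"]) simp
next
  case (Cons h hs)
  obtain k a' where a: "a = k # a'" "unsplit_group k h" "list_all2 unsplit_group a' hs"
    using Cons.prems(1) by (auto simp: list_all2_Cons2)
  let ?ps = "take (length h) ps" and ?ps' = "drop (length h) ps"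
  have "map sum_list ps = map fst h @ map fst (concat hs)" using Cons.prems(2) by simp
  then have sums: "map sum_list ?ps = map fst h" "map sum_list ?ps' = map fst (concat hs)"
    by (metis append_eq_conv_conj length_map take_map drop_map)+
  have pos: "\<forall>p\<in>set ?ps. p \<noteq> [] \<and> (\<forall>v\<in>set p. 0 < v)"
      "\<forall>p\<in>set ?ps'. p \<noteq> [] \<and> (\<forall>v\<in>set p. 0 < v)"
    using Cons.prems(3) by (auto dest: in_set_takeD in_set_dropD)
  obtain gs where gs: "split_entries (concat hs) ?ps' = concat gs" "list_all2 glide_group a' gs" "map merge gs = hs"
    using Cons.IH[OF a(3) sums(2) pos(2)] by blast
  have "split_entries (concat (h # hs)) ps = split_entries h ?ps @ split_entries (concat hs) ?ps'"
    by (simp add: split_entries_append)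
  then show ?case
    using gs split_unsplit_group[OF a(2) sums(1) pos(1)] a(1)
    by (intro exI[of _ "split_entries h ?ps # gs"]) simp
qed

lemma fst_pos_concat_glide_groups: "list_all2 glide_group a gs \<Longrightarrow> \<forall>x\<in>set (concat gs). 0 < fst x"
  by (induction gs arbitrary: a) (auto simp: list_all2_Cons2 glide_group_def)

lemma sum_list_weight_prefix_pos:
  assumes "list_all2 glide_group a gs" and "concat gs = us @ X" and "us \<noteq> []"
  shows "0 < sum_list (map weight us)"
proof -
  obtain g gs' where gs: "gs = g # gs'" using assms(2,3) by (cases gs) auto
  with assms(1) obtain k where "glide_group k g" by (auto simp: list_all2_Cons2)
  then obtain x t where g: "g = x # t" "\<not> snd x" "0 < fst x" by (cases g) (auto simp: glide_group_def)
  then obtain us' where "us = x # us'" using assms(2,3) gs by (cases us) auto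
  then show ?thesis using g by (simp add: weight_def)
qed

lemma glide_groups_unique:
  "list_all2 glide_group a gs \<Longrightarrow> list_all2 glide_group a gs' \<Longrightarrow>
   concat gs = concat gs' \<Longrightarrow> gs = gs'"
proof (induction gs arbitrary: a gs')
  case (Cons g gs)
  obtain k a' where a: "a = k # a'" "glide_group k g" "list_all2 glide_group a' gs"
    using Cons.prems(1) by (auto simp: list_all2_Cons2)
  moreover obtain g' gs'' where gs': "gs' = g' # gs''" "glide_group k g'" "list_all2 glide_group a' gs''"
    using Cons.prems(2) a(1) by (auto simp: list_all2_Cons1)
  have "g @ concat gs = g' @ concat gs''" using Cons.prems(3) gs'(1) by simp
  then obtain us where us: "g = g' @ us \<and> us @ concat gs = concat gs'' \<or> g @ us = g' \<and> concat gs = us @ concat gs''"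
    unfolding append_eq_append_conv2 by blast
  have "us = []"
  proof (rule ccontr)
    assume ne: "us \<noteq> []"
    have weights: "sum_list (map weight g) = k" "sum_list (map weight g') = k"
      using a(2) gs'(2) by (simp_all add: glide_group_def)
    from us show False
    proof
      assume split: "g = g' @ us \<and> us @ concat gs = concat gs''"
      then have "concat gs'' = us @ concat gs" by simp
      then have "0 < sum_list (map weight us)" by (rule sum_list_weight_prefix_pos[OF gs'(3) _ ne])
      moreover have "sum_list (map weight g) = sum_list (map weight g') + sum_list (map weight us)"
        using split by simp
      ultimately show False using weights by linarith
    next
      assume split: "g @ us = g' \<and> concat gs = us @ concat gs''"
      then have "0 < sum_list (map weight us)" using sum_list_weight_prefix_pos[OF a(3) _ ne] by blast
      moreover have "sum_list (map weight g') = sum_list (map weight g) + sum_list (map weight us)"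
        using split by auto
      ultimately show False using weights by linarith
    qed
  qed
  then have "g = g'" "concat gs = concat gs''" using us by auto
  then show ?case using Cons.IH[OF a(3) gs'(3)] gs'(1) by simp
qed simp

lemma glide_groups_eq_if_merge_eq:
  "list_all2 glide_group a gs \<Longrightarrow> list_all2 glide_group a gs' \<Longrightarrow> map merge gs = map merge gs' \<Longrightarrow>
   map fst (concat gs) = map fst (concat gs') \<Longrightarrow> gs = gs'"
proof (induction gs arbitrary: a gs')
  case (Cons g gs)
  obtain k a' where a: "a = k # a'" "glide_group k g" "list_all2 glide_group a' gs"
    using Cons.prems(1) by (auto simp: list_all2_Cons2)
  moreover obtain g' gs'' where gs': "gs' = g' # gs''" "glide_group k g'" "list_all2 glide_group a' gs''"
    using Cons.prems(2) a(1) by (auto simp: list_all2_Cons1)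
  have merge: "merge g = merge g'" "map merge gs = map merge gs''" using Cons.prems(3) gs'(1) by auto
  have fst: "map fst g @ map fst (concat gs) = map fst g' @ map fst (concat gs'')"
    using Cons.prems(4) gs'(1) by simp
  have pos: "\<forall>v\<in>set (map fst g @ map fst (concat gs)). 0 < v"
    using fst_pos_concat_glide_groups[OF Cons.prems(1)] by auto
  have "sum_list (map fst g) = sum_list (map fst g')"
    using sum_list_fst_merge merge(1) by metis
  then have fst_g: "map fst g = map fst g'"
    using append_eq_append_sum_list_eq[OF fst _ pos] by blast
  then have "g = g'" using merge_inj[OF merge(1)] a(2) by (simp add: glide_group_def)
  moreover have "gs = gs''" using Cons.IH[OF a(3) gs'(3) merge(2)] fst fst_g by simp
  ultimately show ?case using gs'(1) by simp
qed simp

definition grouping :: "nat list \<Rightarrow> kompo \<Rightarrow> kompo list" where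
  "grouping a s = (SOME gs. concat gs = s \<and> list_all2 glide_group a gs)"

lemma grouping_spec: "grouped a s \<Longrightarrow> concat (grouping a s) = s \<and> list_all2 glide_group a (grouping a s)"
  unfolding grouped_def grouping_def by (rule someI_ex)

lemma grouping_concat: "list_all2 glide_group a gs \<Longrightarrow> grouping a (concat gs) = gs"
  using grouping_spec[of a "concat gs"] glide_groups_unique unfolding grouped_def by blast

lemma length_le_count_black:
  "list_all2 glide_group a hs \<Longrightarrow> length a \<le> length (filter (\<lambda>x. \<not> snd x) (concat hs))"
proof (induction hs arbitrary: a)
  case (Cons h hs)
  then obtain k a' where a: "a = k # a'" "glide_group k h" "list_all2 glide_group a' hs"
    by (auto simp: list_all2_Cons2)
  then obtain x t where "h = x # t" "\<not> snd x" by (cases h) (auto simp: glide_group_def)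
  then show ?case using Cons.IH[OF a(3)] a(1) by simp
qed simp

lemma unsplit_groups_iff_count_black:
  "list_all2 glide_group a hs \<Longrightarrow>
   list_all2 unsplit_group a hs \<longleftrightarrow> length (filter (\<lambda>x. \<not> snd x) (concat hs)) = length a"
proof (induction hs arbitrary: a)
  case (Cons h hs)
  then obtain k a' where a: "a = k # a'" "glide_group k h" "list_all2 glide_group a' hs"
    by (auto simp: list_all2_Cons2)
  then obtain x t where h: "h = x # t" "\<not> snd x" by (cases h) (auto simp: glide_group_def)
  have "unsplit_group k h \<longleftrightarrow> filter (\<lambda>x. \<not> snd x) t = []"
    using a(2) h by (auto simp: unsplit_group_def filter_empty_conv)
  then show ?case using Cons.IH[OF a(3)] length_le_count_black[OF a(3)] a(1) h by auto
qed simp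

lemma fst_le_sum_list_glide_groups:
  "list_all2 glide_group a gs \<Longrightarrow> x \<in> set (concat gs) \<Longrightarrow> fst x \<le> sum_list a + 1"
proof (induction gs arbitrary: a)
  case (Cons g gs)
  then obtain k a' where a: "a = k # a'" "glide_group k g" "list_all2 glide_group a' gs"
    by (auto simp: list_all2_Cons2)
  show ?case
  proof (cases "x \<in> set g")
    case True
    then have "weight x \<le> k" using a(2) member_le_sum_list[of "weight x" "map weight g"]
      by (simp add: glide_group_def)
    then show ?thesis using a(1) by (auto simp: weight_def split: if_splits)
  next
    case False
    then show ?thesis using Cons.IH[OF a(3)] Cons.prems(2) a(1) by auto
  qed
qed simp

lemma finite_glides:
  assumes pos: "\<forall>x\<in>set a. 0 < x"
  shows "finite {b. is_glide (replicate m 0 @ a) b}"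
proof (rule finite_subset)
  let ?A = "{0..sum_list a + 1} \<times> (UNIV :: bool set)"
  show "{b. is_glide (replicate m 0 @ a) b} \<subseteq> {xs. set xs \<subseteq> ?A \<and> length xs = m + length a}"
  proof
    fix b assume "b \<in> {b. is_glide (replicate m 0 @ a) b}"
    then have wk: "weak_kompo (m + length a) b" and "grouped a (nonzeros b)"
      using is_glide_padded_iff_grouped[OF pos] by auto
    then obtain gs where gs: "concat gs = nonzeros b" "list_all2 glide_group a gs"
      unfolding grouped_def by blast
    have "set b \<subseteq> ?A"
    proof
      fix x assume "x \<in> set b"
      then have "fst x = 0 \<or> x \<in> set (concat gs)" using gs(1) by (auto simp: nonzeros_def)
      then show "x \<in> ?A" using fst_le_sum_list_glide_groups[OF gs(2)] by (cases x) fastforce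
    qed
    then show "b \<in> {xs. set xs \<subseteq> ?A \<and> length xs = m + length a}"
      using wk by (simp add: weak_kompo_def)
  qed
  show "finite {xs. set xs \<subseteq> ?A \<and> length xs = m + length a}"
    by (rule finite_lists_length_eq) simp
qed

definition pad_zeros :: "nat \<Rightarrow> kompo \<Rightarrow> kompo" where
  "pad_zeros n t = replicate (n - length t) (0, False) @ t"

lemma nonzeros_pad_zeros: "\<forall>x\<in>set t. 0 < fst x \<Longrightarrow> nonzeros (pad_zeros n t) = t"
  by (simp add: pad_zeros_def nonzeros_def)

lemma weak_kompo_pad_zeros: "length t \<le> n \<Longrightarrow> \<forall>x\<in>set t. 0 < fst x \<Longrightarrow> weak_kompo n (pad_zeros n t)"
  by (auto simp: pad_zeros_def weak_kompo_def)

lemma unsplit_pad_zeros: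
  assumes "length (filter (\<lambda>x. \<not> snd x) t) = length (flat a')" and "\<forall>x\<in>set t. 0 < fst x"
  shows "unsplit a' (pad_zeros n t)"
proof -
  have "fst (pad_zeros n t ! q) \<noteq> 0" if "p < q" "q < length (pad_zeros n t)" "fst (pad_zeros n t ! p) \<noteq> 0" for p q
  proof -
    have "n - length t \<le> q" using that by (auto simp: pad_zeros_def nth_append split: if_splits)
    then show ?thesis using that(2) assms(2) by (auto simp: pad_zeros_def nth_append)
  qed
  then show ?thesis
    using assms length_filter_is_black_nz[of "pad_zeros n t"] nonzeros_pad_zeros[OF assms(2)]
    unfolding unsplit_def by auto
qed

lemma replicate_zeros_append_nonzeros:
  assumes "\<forall>x\<in>set u. fst x = 0 \<longrightarrow> \<not> snd x"
    and "\<forall>p q. p < q \<and> q < length u \<and> fst (u ! p) \<noteq> 0 \<longrightarrow> fst (u ! q) \<noteq> 0"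
  shows "u = replicate (length u - length (nonzeros u)) (0, False) @ nonzeros u"
  using assms
proof (induction u)
  case (Cons x u)
  show ?case
  proof (cases "fst x = 0")
    case True
    have "\<forall>p q. p < q \<and> q < length u \<and> fst (u ! p) \<noteq> 0 \<longrightarrow> fst (u ! q) \<noteq> 0"
      using Cons.prems(2) by (metis Suc_less_eq length_Cons nth_Cons_Suc)
    then have "u = replicate (length u - length (nonzeros u)) (0, False) @ nonzeros u"
      using Cons.IH Cons.prems(1) by simp
    moreover have "length (nonzeros u) \<le> length u" by (simp add: nonzeros_def)
    ultimately show ?thesis using True Cons.prems(1)
      by (cases x) (simp add: nonzeros_def Suc_diff_le)
  next
    case False
    have "\<forall>y\<in>set u. fst y \<noteq> 0"
      using Cons.prems(2) False
      by (metis in_set_conv_nth length_Cons nth_Cons_0 nth_Cons_Suc zero_less_Suc Suc_mono)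
    then show ?thesis using False by (simp add: nonzeros_def)
  qed
qed (simp add: nonzeros_def)

lemma pad_zeros_nonzeros: "weak_kompo n u \<Longrightarrow> unsplit a' u \<Longrightarrow> pad_zeros n (nonzeros u) = u"
  using replicate_zeros_append_nonzeros[of u]
  unfolding weak_kompo_def unsplit_def pad_zeros_def by metis

fun place_nonzeros :: "nat list \<Rightarrow> kompo \<Rightarrow> kompo" where
  "place_nonzeros [] s = []"
| "place_nonzeros (v # c) s =
     (if v = 0 then (0, False) # place_nonzeros c s else (v, snd (hd s)) # place_nonzeros c (tl s))"

lemma place_nonzeros:
  "map fst s = flat c \<Longrightarrow>
   map fst (place_nonzeros c s) = c \<and> nonzeros (place_nonzeros c s) = s \<and>
   weak_kompo (length c) (place_nonzeros c s)"
proof (induction c arbitrary: s)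
  case (Cons v c)
  show ?case
  proof (cases "v = 0")
    case False
    then obtain y s' where "s = y # s'" "fst y = v" "map fst s' = flat c"
      using Cons.prems by (cases s) (auto simp: flat_def)
    then show ?thesis using Cons.IH[of s'] False by (auto simp: nonzeros_def weak_kompo_def)
  qed (use Cons in \<open>auto simp: flat_def nonzeros_def weak_kompo_def\<close>)
qed (simp add: flat_def nonzeros_def weak_kompo_def)

lemma place_nonzeros_eq: "weak_kompo n b \<Longrightarrow> place_nonzeros (map fst b) (nonzeros b) = b"
  unfolding weak_kompo_def
proof (induction b arbitrary: n)
  case (Cons x b)
  then show ?case by (cases x) (auto simp: nonzeros_def)
qed simp

lemma refines_concat_map_merge: "refines (map fst (concat gs)) (map fst (concat (map merge gs)))"
  by (induction gs) (auto intro: refines_append refines_merge refines_Nil)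

lemma length_concat_map_merge_le: "length (concat (map merge gs)) \<le> length (concat gs)"
  by (induction gs) (auto intro: add_mono length_merge_le)

lemma count_red_concat_map_merge:
  "length (filter snd (concat (map merge gs))) = length (filter snd (concat gs))"
  by (induction gs) (simp_all add: length_filter_snd_merge)

definition merge_glide :: "nat list \<Rightarrow> nat \<Rightarrow> kompo \<Rightarrow> kompo" where
  "merge_glide a n b = pad_zeros n (concat (map merge (grouping a (nonzeros b))))"

lemma merge_glide_unsplit:
  assumes pos: "\<forall>x\<in>set a. 0 < x" and b: "is_glide (replicate m 0 @ a) b"
  shows "is_glide (replicate m 0 @ a) (merge_glide a (m + length a) b) \<and>
    unsplit (replicate m 0 @ a) (merge_glide a (m + length a) b) \<and>
    refines (flat (map fst b)) (flatk (merge_glide a (m + length a) b)) \<and>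
    ex (merge_glide a (m + length a) b) = ex b"
proof -
  define n where "n = m + length a"
  define gs where "gs = grouping a (nonzeros b)"
  define t where "t = concat (map merge gs)"
  have wk: "weak_kompo n b" and "grouped a (nonzeros b)"
    using b unfolding is_glide_padded_iff_grouped[OF pos] n_def by auto
  then have gs: "concat gs = nonzeros b" "list_all2 glide_group a gs"
    using grouping_spec unfolding gs_def by auto
  have unsplit_groups: "list_all2 unsplit_group a (map merge gs)"
    using unsplit_groups_merge[OF gs(2)] .
  then have groups: "list_all2 glide_group a (map merge gs)"
    by (rule glide_groups_if_unsplit_groups)
  have t_pos: "\<forall>x\<in>set t. 0 < fst x"
    using fst_pos_concat_glide_groups[OF groups] unfolding t_def .
  have "length t \<le> length (nonzeros b)"
    using length_concat_map_merge_le[of gs] gs(1) unfolding t_def by simp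
  also have "\<dots> \<le> n" using wk length_filter_le by (metis weak_kompo_def nonzeros_def)
  finally have nz: "nonzeros (pad_zeros n t) = t" and wk_t: "weak_kompo n (pad_zeros n t)"
    using nonzeros_pad_zeros[OF t_pos] weak_kompo_pad_zeros[OF _ t_pos] by auto
  have "is_glide (replicate m 0 @ a) (pad_zeros n t)"
    unfolding is_glide_padded_iff_grouped[OF pos] grouped_def nz
    using wk_t groups unfolding t_def n_def by blast
  moreover have "unsplit (replicate m 0 @ a) (pad_zeros n t)"
    using unsplit_pad_zeros[OF _ t_pos] unsplit_groups
      unsplit_groups_iff_count_black[OF groups] flat_replicate_zero[OF pos] unfolding t_def by simp
  moreover have "refines (flat (map fst b)) (flatk (pad_zeros n t))"
    using refines_concat_map_merge[of gs] gs(1) nz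
    unfolding flat_map_fst flatk_eq_map_fst_nonzeros t_def[symmetric] by simp
  moreover have "ex (pad_zeros n t) = ex b"
    using count_red_concat_map_merge[of gs] gs(1) nz
    unfolding ex_eq_length_filter_nonzeros t_def[symmetric] by simp
  ultimately show ?thesis unfolding merge_glide_def gs_def t_def n_def by simp
qed

lemma merge_glide_inj_on:
  assumes pos: "\<forall>x\<in>set a. 0 < x"
  shows "inj_on (merge_glide a n) {b. is_glide (replicate m 0 @ a) b \<and> map fst b = c}"
proof (rule inj_onI, clarsimp)
  fix b b' assume b: "is_glide (replicate m 0 @ a) b" and b': "is_glide (replicate m 0 @ a) b'"
    and c: "map fst b' = map fst b" and eq: "merge_glide a n b = merge_glide a n b'"
  define gs where "gs = grouping a (nonzeros b)"
  define gs' where "gs' = grouping a (nonzeros b')"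
  have wk: "weak_kompo (m + length a) b" "weak_kompo (m + length a) b'"
    and "grouped a (nonzeros b)" "grouped a (nonzeros b')"
    using b b' is_glide_padded_iff_grouped[OF pos] by auto
  then have gs: "concat gs = nonzeros b" "list_all2 glide_group a gs"
    and gs': "concat gs' = nonzeros b'" "list_all2 glide_group a gs'"
    using grouping_spec unfolding gs_def gs'_def by auto
  have merged: "list_all2 glide_group a (map merge gs)" "list_all2 glide_group a (map merge gs')"
    using gs(2) gs'(2) by (simp_all add: glide_groups_if_unsplit_groups unsplit_groups_merge)
  have "concat (map merge gs) = concat (map merge gs')"
    using eq nonzeros_pad_zeros[OF fst_pos_concat_glide_groups[OF merged(1)], of n]
      nonzeros_pad_zeros[OF fst_pos_concat_glide_groups[OF merged(2)], of n]
    unfolding merge_glide_def gs_def[symmetric] gs'_def[symmetric] by metis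
  then have "map merge gs = map merge gs'" using glide_groups_unique[OF merged] by blast
  moreover have "map fst (concat gs) = map fst (concat gs')"
    using gs(1) gs'(1) c flat_map_fst by metis
  ultimately have "gs = gs'" using glide_groups_eq_if_merge_eq[OF gs(2) gs'(2)] by blast
  then show "b = b'"
    using gs(1) gs'(1) c place_nonzeros_eq[OF wk(1)] place_nonzeros_eq[OF wk(2)] by metis
qed

lemma merge_glide_surj:
  assumes pos: "\<forall>x\<in>set a. 0 < x" and c: "length c = m + length a"
    and u: "is_glide (replicate m 0 @ a) u" "unsplit (replicate m 0 @ a) u" "refines (flat c) (flatk u)"
  shows "\<exists>b. is_glide (replicate m 0 @ a) b \<and> map fst b = c \<and> merge_glide a (m + length a) b = u"
proof -
  define n where "n = m + length a"
  have wk: "weak_kompo n u" and "grouped a (nonzeros u)"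
    using u(1) unfolding is_glide_padded_iff_grouped[OF pos] n_def by auto
  then obtain hs where hs: "concat hs = nonzeros u" "list_all2 glide_group a hs"
    unfolding grouped_def by blast
  have "length (filter (\<lambda>x. \<not> snd x) (concat hs)) = length a"
    using u(2) hs(1) length_filter_is_black_nz[of u] flat_replicate_zero[OF pos]
    unfolding unsplit_def by simp
  then have unsplit_hs: "list_all2 unsplit_group a hs"
    using unsplit_groups_iff_count_black[OF hs(2)] by simp
  obtain ps where ps: "concat ps = flat c" "map sum_list ps = flatk u" "\<forall>p\<in>set ps. p \<noteq> []"
    using u(3) unfolding refines_def by blast
  have ps_pos: "\<forall>p\<in>set ps. p \<noteq> [] \<and> (\<forall>v\<in>set p. 0 < v)"
    using ps(1,3) by (auto simp: flat_def dest!: arg_cong[of _ _ set])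
  have sums: "map sum_list ps = map fst (concat hs)"
    using ps(2) hs(1) flatk_eq_map_fst_nonzeros by simp
  obtain gs where gs: "split_entries (concat hs) ps = concat gs" "list_all2 glide_group a gs"
    "map merge gs = hs"
    using grouped_split_entries[OF unsplit_hs sums ps_pos] by blast
  define s where "s = split_entries (nonzeros u) ps"
  have "map fst s = flat c"
    using map_fst_split_entries[of ps "nonzeros u"] sums hs(1) ps unfolding s_def
    by (metis length_map)
  then have b: "map fst (place_nonzeros c s) = c" "nonzeros (place_nonzeros c s) = s"
    "weak_kompo n (place_nonzeros c s)"
    using place_nonzeros[of s c] c unfolding n_def by auto
  have s_gs: "s = concat gs" using gs(1) hs(1) unfolding s_def by simp
  have "grouped a (nonzeros (place_nonzeros c s))"
    unfolding grouped_def b(2) using s_gs gs(2) by blast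
  then have "is_glide (replicate m 0 @ a) (place_nonzeros c s)"
    using b(3) unfolding is_glide_padded_iff_grouped[OF pos] n_def by blast
  moreover have "merge_glide a n (place_nonzeros c s) = u"
    using b(2) s_gs grouping_concat[OF gs(2)] gs(3) hs(1) pad_zeros_nonzeros[OF wk u(2)]
    unfolding merge_glide_def by simp
  ultimately show ?thesis using b(1) unfolding n_def by blast
qed

lemma bij_betw_merge_glide:
  assumes pos: "\<forall>x\<in>set a. 0 < x" and c: "length c = m + length a"
  shows "bij_betw (merge_glide a (m + length a))
    {b. is_glide (replicate m 0 @ a) b \<and> map fst b = c}
    {u. is_glide (replicate m 0 @ a) u \<and> unsplit (replicate m 0 @ a) u \<and> refines (flat c) (flatk u)}"
  unfolding bij_betw_def
proof
  show "inj_on (merge_glide a (m + length a)) {b. is_glide (replicate m 0 @ a) b \<and> map fst b = c}"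
    by (rule merge_glide_inj_on[OF pos])
  show "merge_glide a (m + length a) ` {b. is_glide (replicate m 0 @ a) b \<and> map fst b = c} =
    {u. is_glide (replicate m 0 @ a) u \<and> unsplit (replicate m 0 @ a) u \<and> refines (flat c) (flatk u)}"
    using merge_glide_unsplit[OF pos] merge_glide_surj[OF pos c] by blast
qed

lemma glide_poly_eq_sum_fundF:
  fixes \<beta> :: "'r::comm_ring_1"
  assumes pos: "\<forall>x\<in>set a. 0 < x"
  shows "glide_poly \<beta> (replicate m 0 @ a) c =
    (\<Sum>u\<in>{u. is_glide (replicate m 0 @ a) u \<and> unsplit (replicate m 0 @ a) u}.
       \<beta> ^ ex u * fundF (flatk u) (m + length a) c)"
proof (cases "length c = m + length a")
  case True
  let ?U = "{u. is_glide (replicate m 0 @ a) u \<and> unsplit (replicate m 0 @ a) u}"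
  let ?S = "{b. is_glide (replicate m 0 @ a) b \<and> map fst b = c}"
  have "finite ?U" using finite_glides[OF pos] by (rule finite_subset[rotated]) auto
  have "(\<Sum>u\<in>?U. \<beta> ^ ex u * fundF (flatk u) (m + length a) c) =
      (\<Sum>u\<in>?U. if refines (flat c) (flatk u) then \<beta> ^ ex u else 0)"
    using True by (intro sum.cong) (simp_all add: fundF_def)
  also have "\<dots> = (\<Sum>u\<in>{u \<in> ?U. refines (flat c) (flatk u)}. \<beta> ^ ex u)"
    using \<open>finite ?U\<close> by (rule sum.inter_filter[symmetric])
  also have "{u \<in> ?U. refines (flat c) (flatk u)} =
      {u. is_glide (replicate m 0 @ a) u \<and> unsplit (replicate m 0 @ a) u \<and> refines (flat c) (flatk u)}"
    by auto
  also have "(\<Sum>u\<in>\<dots>. \<beta> ^ ex u) = (\<Sum>b\<in>?S. \<beta> ^ ex (merge_glide a (m + length a) b))"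
    by (rule sum.reindex_bij_betw[symmetric, OF bij_betw_merge_glide[OF pos True]])
  also have "\<dots> = glide_poly \<beta> (replicate m 0 @ a) c"
    unfolding glide_poly_def using merge_glide_unsplit[OF pos] by (intro sum.cong) auto
  finally show ?thesis ..
next
  case False
  have no_glides: "{b. is_glide (replicate m 0 @ a) b \<and> map fst b = c} = {}"
    using False is_glide_padded_iff_grouped[OF pos] by (auto simp: weak_kompo_def)
  show ?thesis using False unfolding glide_poly_def no_glides by (simp add: fundF_def)
qed

lemma length_flat_mono:
  assumes "sorted_wrt (<) is" and "\<forall>i\<in>set is. i < n" and "length is = length es"
  shows "length (mono n is es) = n \<and> flat (mono n is es) = flat es"
proof -
  define g where "g k = (\<Sum>j<length is. if is ! j = k then es ! j else 0)" for k
  have distinct: "distinct is" using assms(1) strict_sorted_iff by blast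
  have g_notin: "g k = 0" if "k \<notin> set is" for k
    using that unfolding g_def by (auto intro!: sum.neutral simp: nth_mem)
  have "g (is ! j) = es ! j" if "j < length is" for j
  proof -
    have "g (is ! j) = (\<Sum>i<length is. if i = j then es ! i else 0)"
      unfolding g_def using distinct that by (intro sum.cong) (auto simp: nth_eq_iff_index_eq)
    then show ?thesis using that by simp
  qed
  then have "map g is = es" using assms(3) by (intro nth_equalityI) auto
  moreover have "filter (\<lambda>k. k \<in> set is) [0..<n] = is"
    using assms(1,2) strict_sorted_iff by (intro sorted_distinct_set_unique) (auto simp: sorted_wrt_filter)
  moreover have "flat (map g [0..<n]) = flat (map g (filter (\<lambda>k. k \<in> set is) [0..<n]))"
    unfolding flat_def filter_map o_def using g_notin by (induction n) auto
  ultimately show ?thesis unfolding mono_def g_def[symmetric] by simp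
qed

lemma quasisym_sum_fundF:
  "quasisym n (\<lambda>c. \<Sum>b\<in>B. w b * fundF (\<alpha> b) n c)"
  unfolding quasisym_def fundF_def by (auto simp: length_flat_mono)

theorem mainTheorem7:
  fixes \<beta> :: "'r::comm_ring_1" and a :: "nat list" and n :: nat
  assumes "\<forall>x\<in>set a. 0 < x" and "length a \<le> n"
  shows "(\<forall>c. qglide \<beta> a n c =
            (\<Sum>b\<in>{b. is_glide (replicate (n - length a) 0 @ a) b \<and>
                      unsplit (replicate (n - length a) 0 @ a) b}.
               \<beta> ^ ex b * fundF (flatk b) n c))
         \<and> quasisym n (qglide \<beta> a n)"
proof -
  have expansion: "qglide \<beta> a n = (\<lambda>c.
      \<Sum>b\<in>{b. is_glide (replicate (n - length a) 0 @ a) b \<and>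
               unsplit (replicate (n - length a) 0 @ a) b}.
        \<beta> ^ ex b * fundF (flatk b) n c)"
    using glide_poly_eq_sum_fundF[OF assms(1), of \<beta> "n - length a"] assms(2)
    by (simp add: qglide_def fun_eq_iff)
  then have "quasisym n (qglide \<beta> a n)" by (simp only: quasisym_sum_fundF)
  with expansion show ?thesis by simp
qed

end
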